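(* Let $G$ be a finite simple chordless Class 1 graph with maximum degree $\Delta$, let $\gamma$ be a proper $\Delta$-coloring and $\beta$ a proper $(\Delta+1)$-coloring of $G$, and let $\mathcal C$ be the set of proper $(\Delta+1)$-colorings of $G$ that are $K$-equivalent to $\beta$. Let $\alpha\in\mathcal C$ be minimal (as defined below), with missing colors $m_\alpha$ chosen so that $m_\alpha(x)=1$ if and only if $1$ is the only color missing at $x$. If $uv$ is an ugly edge in $\alpha$ and $X_u(\alpha,v)=(ux_0,ux_1,\dots,ux_p)$ with $x_0=v$ and $p\ge 1$, then $vx_p\notin E(G)$.
   Context: A (proper) $t$-coloring of $G$ is a map $\alpha:E(G)\to\{1,\dots,t\}$ with adjacent edges receiving different colors; $M(\alpha,j)$ is the set of edges of color $j$. $K_\alpha(c,d)$ is the subgraph formed by edges colored $c$ or $d$; a $K$-change swaps the two colors on one connected component of some $K_\alpha(c,d)$; two $t$-colorings are $K$-equivalent if one is obtained from the other by a finite sequence of $K$-changes using colors from $\{1,\dots,t\}$. Class 1 means $\chi'(G)=\Delta(G)$. A graph is chordless if no cycle $C$ has a chord (an edge joining two non-consecutive vertices of $C$). In a coloring in $\mathcal C$, an edge is bad if it lies in $M(\gamma,1)$ but is not colored $1$, and ugly if it is not in $M(\gamma,1)$ but is colored $1$. A coloring $\alpha\in\mathcal C$ is minimal if, among the colorings in $\mathcal C$ with the minimum number of bad edges, it has the minimum number of ugly edges. A color $c$ is missing at $x$ if no edge at $x$ has color $c$; $m_\alpha(x)$ is a fixed chosen missing color at $x$. An $\alpha$-fan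 at $u$ is a sequence of distinct edges $(ux_0,\dots,ux_p)$ at $u$ with $m_\alpha(x_i)=\alpha(ux_{i+1})$ for $0\le i<p$, and such that either $m_\alpha(x_p)$ is missing at $u$ or $m_\alpha(x_p)\in\{\alpha(ux_0),\dots,\alpha(ux_{p-1})\}$; $X_u(\alpha,v)$ denotes the unique such fan with $x_0=v$. *)

theory Defs
  imports Main
begin

definition simple_graph :: "'a set \<Rightarrow> 'a set set \<Rightarrow> bool" where
  "simple_graph V E \<longleftrightarrow> finite V \<and> (\<forall>e\<in>E. \<exists>x y. x \<in> V \<and> y \<in> V \<and> x \<noteq> y \<and> e = {x, y})"

definition degree :: "'a set set \<Rightarrow> 'a \<Rightarrow> nat" where
  "degree E x = card {e \<in> E. x \<in> e}"

definition max_degree :: "'a set \<Rightarrow> 'a set set \<Rightarrow> nat" where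
  "max_degree V E = Max (insert 0 (degree E ` V))"

definition proper_coloring :: "'a set set \<Rightarrow> nat \<Rightarrow> ('a set \<Rightarrow> nat) \<Rightarrow> bool" where
  "proper_coloring E t \<alpha> \<longleftrightarrow>
     (\<forall>e\<in>E. \<alpha> e \<in> {1..t}) \<and>
     (\<forall>e\<in>E. \<forall>f\<in>E. e \<noteq> f \<and> e \<inter> f \<noteq> {} \<longrightarrow> \<alpha> e \<noteq> \<alpha> f)"

definition chromatic_index :: "'a set set \<Rightarrow> nat" where
  "chromatic_index E = (LEAST t. \<exists>\<alpha>. proper_coloring E t \<alpha>)"

definition class1 :: "'a set \<Rightarrow> 'a set set \<Rightarrow> bool" where
  "class1 V E \<longleftrightarrow> chromatic_index E = max_degree V E"

definition is_cycle :: "'a set set \<Rightarrow> 'a list \<Rightarrow> bool" where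
  "is_cycle E vs \<longleftrightarrow> length vs \<ge> 3 \<and> distinct vs \<and>
     (\<forall>i < length vs. {vs ! i, vs ! ((i + 1) mod length vs)} \<in> E)"

definition chordless :: "'a set set \<Rightarrow> bool" where
  "chordless E \<longleftrightarrow> (\<forall>vs i j. is_cycle E vs \<and> i < length vs \<and> j < length vs \<and>
       {vs ! i, vs ! j} \<in> E \<longrightarrow>
       j = (i + 1) mod length vs \<or> i = (j + 1) mod length vs)"

text \<open>K_alpha(c,d): edges coloured c or d; a K-change swaps c and d on one
  connected component (given as the set of edges connected to an edge e
  within K_alpha(c,d)).\<close>

definition Kedges :: "'a set set \<Rightarrow> ('a set \<Rightarrow> nat) \<Rightarrow> nat \<Rightarrow> nat \<Rightarrow> 'a set set" where
  "Kedges E \<alpha> c d = {e \<in> E. \<alpha> e = c \<or> \<alpha> e = d}"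

definition Kadj :: "'a set set \<Rightarrow> ('a set \<Rightarrow> nat) \<Rightarrow> nat \<Rightarrow> nat \<Rightarrow> ('a set \<times> 'a set) set" where
  "Kadj E \<alpha> c d = {(e, f). e \<in> Kedges E \<alpha> c d \<and> f \<in> Kedges E \<alpha> c d \<and> e \<inter> f \<noteq> {}}"

definition Kcomponent :: "'a set set \<Rightarrow> ('a set \<Rightarrow> nat) \<Rightarrow> nat \<Rightarrow> nat \<Rightarrow> 'a set \<Rightarrow> 'a set set" where
  "Kcomponent E \<alpha> c d e = {f. (e, f) \<in> (Kadj E \<alpha> c d)\<^sup>*}"

definition Kchange :: "'a set set \<Rightarrow> nat \<Rightarrow> ('a set \<Rightarrow> nat) \<Rightarrow> ('a set \<Rightarrow> nat) \<Rightarrow> bool" where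
  "Kchange E t \<alpha> \<alpha>' \<longleftrightarrow>
     (\<exists>c d e. c \<in> {1..t} \<and> d \<in> {1..t} \<and> c \<noteq> d \<and> e \<in> Kedges E \<alpha> c d \<and>
        (\<forall>f. \<alpha>' f = (if f \<in> Kcomponent E \<alpha> c d e
                        then (if \<alpha> f = c then d else c) else \<alpha> f)))"

definition K_equivalent :: "'a set set \<Rightarrow> nat \<Rightarrow> ('a set \<Rightarrow> nat) \<Rightarrow> ('a set \<Rightarrow> nat) \<Rightarrow> bool" where
  "K_equivalent E t \<alpha> \<beta> \<longleftrightarrow> (Kchange E t)\<^sup>*\<^sup>* \<alpha> \<beta>"

definition Ccol :: "'a set \<Rightarrow> 'a set set \<Rightarrow> ('a set \<Rightarrow> nat) \<Rightarrow> ('a set \<Rightarrow> nat) set" where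
  "Ccol V E \<beta> = {\<alpha>. proper_coloring E (max_degree V E + 1) \<alpha> \<and>
                      K_equivalent E (max_degree V E + 1) \<beta> \<alpha>}"

definition bad_edges :: "'a set set \<Rightarrow> ('a set \<Rightarrow> nat) \<Rightarrow> ('a set \<Rightarrow> nat) \<Rightarrow> 'a set set" where
  "bad_edges E \<gamma> \<alpha> = {e \<in> E. \<gamma> e = 1 \<and> \<alpha> e \<noteq> 1}"

definition ugly_edges :: "'a set set \<Rightarrow> ('a set \<Rightarrow> nat) \<Rightarrow> ('a set \<Rightarrow> nat) \<Rightarrow> 'a set set" where
  "ugly_edges E \<gamma> \<alpha> = {e \<in> E. \<gamma> e \<noteq> 1 \<and> \<alpha> e = 1}"

definition minimal_col :: "'a set \<Rightarrow> 'a set set \<Rightarrow> ('a set \<Rightarrow> nat) \<Rightarrow> ('a set \<Rightarrow> nat) \<Rightarrow> ('a set \<Rightarrow> nat) \<Rightarrow> bool" where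
  "minimal_col V E \<gamma> \<beta> \<alpha> \<longleftrightarrow> \<alpha> \<in> Ccol V E \<beta> \<and>
     (\<forall>\<alpha>'\<in>Ccol V E \<beta>. card (bad_edges E \<gamma> \<alpha>) \<le> card (bad_edges E \<gamma> \<alpha>')) \<and>
     (\<forall>\<alpha>'\<in>Ccol V E \<beta>. card (bad_edges E \<gamma> \<alpha>') = card (bad_edges E \<gamma> \<alpha>) \<longrightarrow>
         card (ugly_edges E \<gamma> \<alpha>) \<le> card (ugly_edges E \<gamma> \<alpha>'))"

definition missing :: "'a set set \<Rightarrow> nat \<Rightarrow> ('a set \<Rightarrow> nat) \<Rightarrow> 'a \<Rightarrow> nat \<Rightarrow> bool" where
  "missing E t \<alpha> x c \<longleftrightarrow> c \<in> {1..t} \<and> \<not> (\<exists>e\<in>E. x \<in> e \<and> \<alpha> e = c)"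

text \<open>An alpha-fan at u, given by the list [x_0, ..., x_p] of the far ends of
  its edges u x_0, ..., u x_p, with respect to the chosen missing-colour map m.\<close>

definition is_fan :: "'a set set \<Rightarrow> nat \<Rightarrow> ('a set \<Rightarrow> nat) \<Rightarrow> ('a \<Rightarrow> nat) \<Rightarrow> 'a \<Rightarrow> 'a list \<Rightarrow> bool" where
  "is_fan E t \<alpha> m u xs \<longleftrightarrow> xs \<noteq> [] \<and> distinct xs \<and>
     (\<forall>x\<in>set xs. {u, x} \<in> E) \<and>
     (\<forall>i. Suc i < length xs \<longrightarrow> m (xs ! i) = \<alpha> {u, xs ! Suc i}) \<and>
     (missing E t \<alpha> u (m (last xs)) \<or>
      m (last xs) \<in> {\<alpha> {u, xs ! i} | i. i < length xs - 1})"

end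

theory Submission
  imports Defs "HOL-Library.Transitive_Closure_Table"
begin

text \<open>If \<open>v x\<^sub>p\<close> were an edge, then \<open>u v x\<^sub>p\<close> would be a triangle containing the ugly
  edge \<open>uv\<close>. In a chordless graph no path can leave a triangle vertex \<open>p\<close> through a third
  vertex and come back to the triangle without creating a chord at \<open>p\<close>. Hence a Kempe
  chain started at an edge \<open>py\<close> (with a colour missing at \<open>p\<close>) never touches the other
  two triangle vertices. Using two such K-changes, a colour \<open>c \<noteq> 1\<close> can be made missing
  at both \<open>u\<close> and \<open>v\<close> without touching colour \<open>1\<close> anywhere, and a final K-change
  recolours \<open>uv\<close> from \<open>1\<close> to \<open>c\<close>. This removes an ugly edge without creating a bad one,
  contradicting the minimality of \<open>\<alpha>\<close>.\<close>

lemma simple_graph_edgeD: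
  assumes "simple_graph V E" "{a, b} \<in> E"
  shows "a \<noteq> b" "a \<in> V" "b \<in> V"
proof -
  obtain x y where "x \<in> V" "y \<in> V" "x \<noteq> y" "{a, b} = {x, y}"
    using assms unfolding simple_graph_def by blast
  then show "a \<noteq> b" "a \<in> V" "b \<in> V"
    by (auto simp: doubleton_eq_iff)
qed

lemma simple_graph_edge_other_end:
  assumes "simple_graph V E" "g \<in> E" "z \<in> g"
  obtains z' where "g = {z, z'}"
  using assms unfolding simple_graph_def by (metis insert_commute insertE singletonD)

lemma simple_graph_finite_edges:
  assumes "simple_graph V E"
  shows "finite E"
proof (rule finite_subset)
  show "E \<subseteq> Pow V" and "finite (Pow V)"
    using assms unfolding simple_graph_def by auto
qed

lemma missing_color_exists:
  assumes G: "simple_graph V E" and x: "x \<in> V"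
  obtains d where "missing E (max_degree V E + 1) \<alpha> x d"
proof -
  have "\<exists>d. missing E (max_degree V E + 1) \<alpha> x d"
  proof (rule ccontr)
    assume "\<nexists>d. missing E (max_degree V E + 1) \<alpha> x d"
    then have all_used: "{1..max_degree V E + 1} \<subseteq> \<alpha> ` {e \<in> E. x \<in> e}"
      unfolding missing_def by blast
    have fin: "finite {e \<in> E. x \<in> e}"
      using simple_graph_finite_edges[OF G] by simp
    have "max_degree V E + 1 \<le> card (\<alpha> ` {e \<in> E. x \<in> e})"
      using card_mono[OF finite_imageI[OF fin] all_used] by simp
    also have "\<dots> \<le> degree E x"
      unfolding degree_def using fin by (simp add: card_image_le)
    also have "\<dots> \<le> max_degree V E"
      using G x unfolding max_degree_def simple_graph_def by (intro Max_ge) auto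
    finally show False by simp
  qed
  then show ?thesis using that by blast
qed

lemma proper_coloring_adjacent_neq:
  assumes "proper_coloring E t \<delta>" "e \<in> E" "f \<in> E" "e \<noteq> f" "e \<inter> f \<noteq> {}"
  shows "\<delta> e \<noteq> \<delta> f"
  using assms unfolding proper_coloring_def by blast

lemma proper_coloring_triangle_ge_3:
  assumes G: "simple_graph V E" and \<delta>: "proper_coloring E t \<delta>"
    and uv: "{u, v} \<in> E" and uw: "{u, w} \<in> E" and vw: "{v, w} \<in> E"
  shows "3 \<le> t"
proof -
  have "u \<noteq> v" "u \<noteq> w" "v \<noteq> w"
    using simple_graph_edgeD[OF G] uv uw vw by blast+
  then have "{u, v} \<noteq> {u, w}" "{u, v} \<noteq> {v, w}" "{u, w} \<noteq> {v, w}"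
    by (auto simp: doubleton_eq_iff)
  then have "card {\<delta> {u, v}, \<delta> {u, w}, \<delta> {v, w}} = 3"
    using proper_coloring_adjacent_neq[OF \<delta>] uv uw vw by auto
  moreover have "{\<delta> {u, v}, \<delta> {u, w}, \<delta> {v, w}} \<subseteq> {1..t}"
    using \<delta> uv uw vw unfolding proper_coloring_def by blast
  ultimately show ?thesis
    by (metis card_atLeastAtMost card_mono finite_atLeastAtMost diff_Suc_1)
qed

lemma Kcomponent_self: "e \<in> Kcomponent E \<alpha> c d e"
  unfolding Kcomponent_def by simp

lemma Kcomponent_induct [consumes 1, case_names base step]:
  assumes "f \<in> Kcomponent E \<alpha> c d e"
    and "P e"
    and "\<And>f g. f \<in> Kcomponent E \<alpha> c d e \<Longrightarrow> g \<in> Kcomponent E \<alpha> c d e \<Longrightarrow> P f \<Longrightarrow>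
           g \<in> Kedges E \<alpha> c d \<Longrightarrow> f \<inter> g \<noteq> {} \<Longrightarrow> P g"
  shows "P f"
proof -
  have "(e, f) \<in> (Kadj E \<alpha> c d)\<^sup>*"
    using assms(1) unfolding Kcomponent_def by simp
  then show ?thesis
  proof (induction rule: rtrancl_induct)
    case base
    show ?case by fact
  next
    case (step f g)
    then have "g \<in> Kcomponent E \<alpha> c d e"
      unfolding Kcomponent_def by (simp add: rtrancl_into_rtrancl)
    with step show ?case
      using assms(3)[of f g] unfolding Kcomponent_def Kadj_def by simp
  qed
qed

lemma Kcomponent_subset_Kedges:
  assumes "e \<in> Kedges E \<alpha> c d" "f \<in> Kcomponent E \<alpha> c d e"
  shows "f \<in> Kedges E \<alpha> c d"
  using assms(2) by (induction rule: Kcomponent_induct) (use assms(1) in auto)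

lemma Kcomponent_adjacent_closed:
  assumes "e \<in> Kedges E \<alpha> c d" "f \<in> Kcomponent E \<alpha> c d e"
    and "g \<in> Kedges E \<alpha> c d" "f \<inter> g \<noteq> {}"
  shows "g \<in> Kcomponent E \<alpha> c d e"
proof -
  have "(f, g) \<in> Kadj E \<alpha> c d"
    using Kcomponent_subset_Kedges[OF assms(1,2)] assms(3,4) unfolding Kadj_def by simp
  with assms(2) show ?thesis
    unfolding Kcomponent_def by (simp add: rtrancl_into_rtrancl)
qed

definition Kswap :: "'a set set \<Rightarrow> ('a set \<Rightarrow> nat) \<Rightarrow> nat \<Rightarrow> nat \<Rightarrow> 'a set \<Rightarrow> 'a set \<Rightarrow> nat" where
  "Kswap E \<alpha> c d e = (\<lambda>f. if f \<in> Kcomponent E \<alpha> c d e then (if \<alpha> f = c then d else c) else \<alpha> f)"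

lemma Kchange_Kswap:
  assumes "c \<in> {1..t}" "d \<in> {1..t}" "c \<noteq> d" "e \<in> Kedges E \<alpha> c d"
  shows "Kchange E t \<alpha> (Kswap E \<alpha> c d e)"
  unfolding Kchange_def Kswap_def using assms by blast

lemma KchangeE:
  assumes "Kchange E t \<alpha> \<alpha>'"
  obtains c d e where "c \<in> {1..t}" "d \<in> {1..t}" "c \<noteq> d" "e \<in> Kedges E \<alpha> c d"
    "\<alpha>' = Kswap E \<alpha> c d e"
  using assms unfolding Kchange_def Kswap_def by blast

lemma Kswap_outside:
  "f \<notin> Kcomponent E \<alpha> c d e \<Longrightarrow> Kswap E \<alpha> c d e f = \<alpha> f"
  unfolding Kswap_def by simp

lemma Kswap_eq_1_iff:
  assumes "e \<in> Kedges E \<alpha> c d" "c \<noteq> 1" "d \<noteq> 1"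
  shows "Kswap E \<alpha> c d e f = 1 \<longleftrightarrow> \<alpha> f = 1"
  using Kcomponent_subset_Kedges[OF assms(1), of f] assms(2,3)
  unfolding Kswap_def Kedges_def by auto

lemma proper_coloring_Kswap:
  assumes P: "proper_coloring E t \<alpha>"
    and cd: "c \<in> {1..t}" "d \<in> {1..t}" "c \<noteq> d" and e: "e \<in> Kedges E \<alpha> c d"
  shows "proper_coloring E t (Kswap E \<alpha> c d e)"
proof -
  let ?K = "Kcomponent E \<alpha> c d e"
  let ?\<alpha>' = "Kswap E \<alpha> c d e"
  have inside: "\<alpha> f \<in> {c, d}" if "f \<in> ?K" for f
    using Kcomponent_subset_Kedges[OF e that] unfolding Kedges_def by simp
  have border: "\<alpha> f \<notin> {c, d}" if "f \<in> E" "f \<notin> ?K" "g \<in> ?K" "f \<inter> g \<noteq> {}" for f g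
    using Kcomponent_adjacent_closed[OF e that(3), of f] that unfolding Kedges_def
    by (auto simp: inf_commute)
  show ?thesis
    unfolding proper_coloring_def
  proof (intro conjI ballI impI)
    fix f assume "f \<in> E"
    then show "?\<alpha>' f \<in> {1..t}"
      using P cd unfolding proper_coloring_def Kswap_def by auto
  next
    fix f g assume f: "f \<in> E" and g: "g \<in> E" and fg: "f \<noteq> g \<and> f \<inter> g \<noteq> {}"
    then have "\<alpha> f \<noteq> \<alpha> g"
      using proper_coloring_adjacent_neq[OF P] by blast
    then show "?\<alpha>' f \<noteq> ?\<alpha>' g"
      using inside[of f] inside[of g] border[OF f, of g] border[OF g, of f] f g fg cd(3)
      unfolding Kswap_def by (auto simp: inf_commute)
  qed
qed

lemma proper_coloring_Kchanges:
  assumes "(Kchange E t)\<^sup>*\<^sup>* \<alpha> \<alpha>'" "proper_coloring E t \<alpha>"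
  shows "proper_coloring E t \<alpha>'"
  using assms by induction (auto elim: KchangeE intro: proper_coloring_Kswap)

lemma Ccol_Kchanges_closed:
  assumes "\<alpha> \<in> Ccol V E \<beta>" "(Kchange E (max_degree V E + 1))\<^sup>*\<^sup>* \<alpha> \<alpha>'"
  shows "\<alpha>' \<in> Ccol V E \<beta>"
  using assms proper_coloring_Kchanges[OF assms(2)]
  unfolding Ccol_def K_equivalent_def by auto

lemma is_cycle_close_path:
  assumes L: "distinct L" "2 \<le> length L" "\<forall>i. Suc i < length L \<longrightarrow> {L ! i, L ! Suc i} \<in> E"
    and pt: "p \<notin> set L" "t \<notin> set L" "p \<noteq> t"
    and edges: "{p, hd L} \<in> E" "{last L, t} \<in> E" "{t, p} \<in> E"
  shows "is_cycle E (p # L @ [t])"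
  unfolding is_cycle_def
proof (intro conjI allI impI)
  let ?vs = "p # L @ [t]"
  let ?n = "length L"
  show "3 \<le> length ?vs" using L(2) by simp
  show "distinct ?vs" using L(1) pt by auto
  fix i assume i: "i < length ?vs"
  have L_ne: "L \<noteq> []" using L(2) by auto
  then have hd: "hd L = L ! 0" and last: "last L = L ! (?n - 1)"
    by (simp_all add: hd_conv_nth last_conv_nth)
  consider "i = 0" | k where "i = Suc k" "Suc k < ?n" | "i = ?n" | "i = Suc ?n"
    using i by (cases i) (auto, linarith)
  then show "{?vs ! i, ?vs ! ((i + 1) mod length ?vs)} \<in> E"
  proof cases
    case 1
    then show ?thesis using edges(1) L_ne hd by (simp add: nth_append)
  next
    case 2
    then show ?thesis using L(3) by (simp add: nth_append)
  next
    case 3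
    then show ?thesis using edges(2) L(2) last by (cases ?n) (simp_all add: nth_append)
  next
    case 4
    then show ?thesis using edges(3) by (simp add: nth_append)
  qed
qed

lemma chordless_no_chord_to_path_end:
  assumes CL: "chordless E"
    and L: "distinct L" "2 \<le> length L" "\<forall>i. Suc i < length L \<longrightarrow> {L ! i, L ! Suc i} \<in> E"
    and pt: "p \<notin> set L" "t \<notin> set L" "p \<noteq> t"
    and edges: "{p, hd L} \<in> E" "{last L, t} \<in> E" "{t, p} \<in> E"
    and chord: "{p, last L} \<in> E"
  shows False
proof -
  let ?vs = "p # L @ [t]"
  let ?n = "length L"
  have "L \<noteq> []" using L(2) by auto
  then have "?vs ! ?n = last L"
    by (cases ?n) (simp_all add: nth_append last_conv_nth)
  then have "{?vs ! 0, ?vs ! ?n} \<in> E" using chord by simp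
  then have "?n = 1 mod length ?vs \<or> 0 = (?n + 1) mod length ?vs"
    using CL is_cycle_close_path[OF L pt edges] unfolding chordless_def
    by (metis (no_types) add_0 length_append_singleton length_Cons less_Suc_eq zero_less_Suc)
  then show False using L(2) by simp
qed

lemma chordless_triangle_no_detour:
  assumes G: "simple_graph V E" and CL: "chordless E"
    and pq: "{p, q} \<in> E" and pw: "{p, w} \<in> E" and qw: "{q, w} \<in> E"
    and py: "{p, y} \<in> E" "y \<notin> {q, w}"
    \<comment> \<open>a walk from \<open>y\<close> in \<open>G - p\<close> that stops as soon as it reaches \<open>q\<close> or \<open>w\<close>\<close>
    and walk: "(\<lambda>z z'. {z, z'} \<in> E \<and> z \<notin> {p, q, w} \<and> z' \<noteq> p)\<^sup>*\<^sup>* y s"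
    and s: "s \<in> {q, w}"
  shows False
proof -
  let ?B = "\<lambda>z z'. {z, z'} \<in> E \<and> z \<notin> {p, q, w} \<and> z' \<noteq> p"
  obtain xs where path: "rtrancl_path ?B y xs s" and dist: "distinct (y # xs)"
  proof -
    obtain xs0 where "rtrancl_path ?B y xs0 s"
      using walk by (auto simp: rtranclp_eq_rtrancl_path)
    then show ?thesis using that by (rule rtrancl_path_distinct)
  qed
  define L where "L = y # xs"
  have "xs \<noteq> []"
  proof
    assume "xs = []"
    with path have "y = s" by (cases rule: rtrancl_path.cases) simp_all
    with py(2) s show False by simp
  qed
  then have len: "2 \<le> length L" and last: "last L = s"
    using rtrancl_path_last[OF path] unfolding L_def by (auto simp: Suc_le_eq)
  have step: "?B (L ! i) (L ! Suc i)" if "Suc i < length L" for i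
    using rtrancl_path_nth[OF path, of i] that unfolding L_def by simp
  obtain t where t: "t \<in> {q, w}" "t \<noteq> s" "{s, t} \<in> E" "{t, p} \<in> E"
  proof (cases "s = q")
    case True
    then show ?thesis
      using that[of w] qw pw simple_graph_edgeD(1)[OF G qw] by (simp add: insert_commute)
  next
    case False
    then show ?thesis
      using that[of q] s qw pq simple_graph_edgeD(1)[OF G qw] by (simp add: insert_commute)
  qed
  have "y \<noteq> p" using simple_graph_edgeD(1)[OF G py(1)] by simp
  moreover have "p \<notin> set xs"
    using rtrancl_path_nth[OF path] by (auto simp: in_set_conv_nth)
  ultimately have p_notin: "p \<notin> set L" unfolding L_def by simp
  have t_notin: "t \<notin> set L"
  proof
    assume "t \<in> set L"
    then obtain i where i: "i < length L" "L ! i = t" by (auto simp: in_set_conv_nth)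
    show False
    proof (cases "Suc i < length L")
      case True
      then show False using step[OF True] i t(1) by auto
    next
      case False
      then have "i = length L - 1" using i by simp
      then have "L ! i = last L"
        using last_conv_nth[of L] unfolding L_def by simp
      then show False using i last t(2) by simp
    qed
  qed
  have "p \<noteq> t" using t(4) simple_graph_edgeD(1)[OF G] by blast
  moreover have "\<forall>i. Suc i < length L \<longrightarrow> {L ! i, L ! Suc i} \<in> E" using step by blast
  moreover have "{p, last L} \<in> E" using last s pq pw by auto
  ultimately show False
    using chordless_no_chord_to_path_end[OF CL _ len _ p_notin t_notin] dist py(1) last t(3,4)
    unfolding L_def by simp
qed

lemma Kcomponent_at_missing_end:
  assumes P: "proper_coloring E t \<alpha>" and py: "{p, y} \<in> E" "\<alpha> {p, y} = c"
    and d: "missing E t \<alpha> p d"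
    and f: "f \<in> Kcomponent E \<alpha> c d {p, y}" "p \<in> f"
  shows "f = {p, y}"
proof (rule ccontr)
  assume f_ne: "f \<noteq> {p, y}"
  have "f \<in> Kedges E \<alpha> c d"
    using Kcomponent_subset_Kedges[OF _ f(1)] py unfolding Kedges_def by simp
  then have "f \<in> E" "\<alpha> f = c"
    using d f(2) unfolding Kedges_def missing_def by auto
  then show False
    using proper_coloring_adjacent_neq[OF P _ py(1) f_ne] f(2) py(2) by auto
qed

lemma missing_Kswap:
  assumes P: "proper_coloring E t \<alpha>" and py: "{p, y} \<in> E" "\<alpha> {p, y} = c"
    and c: "c \<in> {1..t}" and d: "missing E t \<alpha> p d"
  shows "missing E t (Kswap E \<alpha> c d {p, y}) p c"
  unfolding missing_def
proof (intro conjI notI)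
  show "c \<in> {1..t}" by fact
  assume "\<exists>f\<in>E. p \<in> f \<and> Kswap E \<alpha> c d {p, y} f = c"
  then obtain f where f: "f \<in> E" "p \<in> f" "Kswap E \<alpha> c d {p, y} f = c" by blast
  have "c \<noteq> d" using d py unfolding missing_def by blast
  show False
  proof (cases "f \<in> Kcomponent E \<alpha> c d {p, y}")
    case True
    then have "f = {p, y}" using Kcomponent_at_missing_end[OF P py d] f(2) by blast
    then show False using f(3) py(2) \<open>c \<noteq> d\<close> by (simp add: Kswap_def Kcomponent_self)
  next
    case False
    then have "f \<noteq> {p, y}" using Kcomponent_self by blast
    then show False
      using proper_coloring_adjacent_neq[OF P f(1) py(1)] f Kswap_outside[OF False] py(2) by auto
  qed
qed

lemma Kswap_single_edge:
  assumes P: "proper_coloring E t \<alpha>" and uv: "{u, v} \<in> E" "\<alpha> {u, v} = c"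
    and du: "missing E t \<alpha> u d" and dv: "missing E t \<alpha> v d"
  shows "Kswap E \<alpha> c d {u, v} = \<alpha>({u, v} := d)"
proof -
  have "f = {u, v}" if "f \<in> Kcomponent E \<alpha> c d {u, v}" for f
    using that
  proof (induction rule: Kcomponent_induct)
    case (step f g)
    then have "u \<in> g \<or> v \<in> g" by blast
    then show ?case
    proof
      assume "u \<in> g"
      then show ?case using Kcomponent_at_missing_end[OF P uv du step.hyps(2)] by blast
    next
      assume "v \<in> g"
      then show ?case
        using Kcomponent_at_missing_end[of E t \<alpha> v u c d g] P uv dv step.hyps(2)
        by (simp add: insert_commute)
    qed
  qed simp
  then have "Kcomponent E \<alpha> c d {u, v} = {{u, v}}" using Kcomponent_self by blast
  then show ?thesis using uv(2) by (auto simp: Kswap_def)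
qed

lemma Kcomponent_avoids_triangle:
  assumes G: "simple_graph V E" and CL: "chordless E" and P: "proper_coloring E t \<alpha>"
    and pq: "{p, q} \<in> E" and pw: "{p, w} \<in> E" and qw: "{q, w} \<in> E"
    and py: "{p, y} \<in> E" "\<alpha> {p, y} = c" and c: "c \<noteq> \<alpha> {p, q}" "c \<noteq> \<alpha> {p, w}"
    and d: "missing E t \<alpha> p d"
    and f: "f \<in> Kcomponent E \<alpha> c d {p, y}"
  shows "q \<notin> f \<and> w \<notin> f"
proof -
  let ?B = "\<lambda>z z'. {z, z'} \<in> E \<and> z \<notin> {p, q, w} \<and> z' \<noteq> p"
  have y: "y \<notin> {q, w}" using py c by auto
  have no_detour: "\<not> ?B\<^sup>*\<^sup>* y s" if "s \<in> {q, w}" for s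
    using chordless_triangle_no_detour[OF G CL pq pw qw py(1) y _ that] by blast
  have "f \<subseteq> insert p {z. ?B\<^sup>*\<^sup>* y z}"
    using f
  proof (induction rule: Kcomponent_induct)
    case (step f g)
    show ?case
    proof (cases "p \<in> g")
      case True
      then show ?thesis using Kcomponent_at_missing_end[OF P py d step.hyps(2)] by simp
    next
      case False
      obtain z where z: "z \<in> f" "z \<in> g" using step.hyps(4) by blast
      then have zB: "?B\<^sup>*\<^sup>* y z" using step.IH False by blast
      then have "z \<notin> {p, q, w}" using no_detour z(2) False by blast
      moreover obtain z' where g: "g = {z, z'}"
        using simple_graph_edge_other_end[OF G _ z(2)] step.hyps(3) unfolding Kedges_def by blast
      ultimately have "?B z z'" using step.hyps(3) False unfolding Kedges_def by auto
      then show ?thesis using zB g by (auto intro: rtranclp.rtrancl_into_rtrancl)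
    qed
  qed simp
  moreover have "p \<noteq> q" "p \<noteq> w" using simple_graph_edgeD(1)[OF G] pq pw by blast+
  ultimately show ?thesis using no_detour by blast
qed

lemma make_missing_at_triangle_vertex:
  assumes G: "simple_graph V E" and CL: "chordless E"
    and P: "proper_coloring E t \<alpha>" and t: "t = max_degree V E + 1"
    and pq: "{p, q} \<in> E" and pw: "{p, w} \<in> E" and qw: "{q, w} \<in> E"
    and one: "\<alpha> {p, q} = 1" and c: "c \<in> {1..t}" "c \<noteq> 1" "c \<noteq> \<alpha> {p, w}"
  obtains \<alpha>' where "(Kchange E t)\<^sup>*\<^sup>* \<alpha> \<alpha>'" "\<forall>f. \<alpha>' f = 1 \<longleftrightarrow> \<alpha> f = 1"
    "\<forall>f\<in>E. q \<in> f \<or> w \<in> f \<longrightarrow> \<alpha>' f = \<alpha> f" "missing E t \<alpha>' p c"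
proof (cases "missing E t \<alpha> p c")
  case True
  then show ?thesis using that[of \<alpha>] by simp
next
  case False
  then obtain f where "f \<in> E" "p \<in> f" "\<alpha> f = c" using c(1) unfolding missing_def by blast
  moreover obtain y where "f = {p, y}" using simple_graph_edge_other_end[OF G \<open>f \<in> E\<close> \<open>p \<in> f\<close>] .
  ultimately have py: "{p, y} \<in> E" "\<alpha> {p, y} = c" by simp_all
  obtain d where d: "missing E t \<alpha> p d"
    using missing_color_exists[OF G simple_graph_edgeD(2)[OF G pq]] t by blast
  have "d \<noteq> 1" using d pq one unfolding missing_def by blast
  have "d \<in> {1..t}" "c \<noteq> d" using d py unfolding missing_def by auto
  then have cd_edge: "{p, y} \<in> Kedges E \<alpha> c d" using py unfolding Kedges_def by simp
  let ?\<alpha>' = "Kswap E \<alpha> c d {p, y}"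
  show ?thesis
  proof (rule that[of ?\<alpha>'])
    show "(Kchange E t)\<^sup>*\<^sup>* \<alpha> ?\<alpha>'"
      using Kchange_Kswap[OF c(1) \<open>d \<in> {1..t}\<close> \<open>c \<noteq> d\<close> cd_edge] by simp
    show "\<forall>f. ?\<alpha>' f = 1 \<longleftrightarrow> \<alpha> f = 1"
      using Kswap_eq_1_iff[OF cd_edge c(2) \<open>d \<noteq> 1\<close>] by blast
    show "\<forall>f\<in>E. q \<in> f \<or> w \<in> f \<longrightarrow> ?\<alpha>' f = \<alpha> f"
      using Kcomponent_avoids_triangle[OF G CL P pq pw qw py _ c(3) d] one c(2)
      by (metis Kswap_outside)
    show "missing E t ?\<alpha>' p c"
      using missing_Kswap[OF P py c(1) d] .
  qed
qed

lemma color_avoiding_three: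
  assumes "4 \<le> t"
  obtains c :: nat where "c \<in> {1..t}" "c \<notin> {a, b, e}"
proof -
  have "card {a, b, e} \<le> 3" by (auto simp: card_insert_if)
  with assms have "\<not> {1..t} \<subseteq> {a, b, e}"
    using card_mono[of "{a, b, e}" "{1..t}"] by fastforce
  then show ?thesis using that by blast
qed

lemma bad_ugly_edges_uncolor_one:
  assumes "\<forall>f. f \<noteq> e \<longrightarrow> (\<alpha>' f = 1 \<longleftrightarrow> \<alpha> f = 1)" "\<alpha>' e \<noteq> 1" "\<gamma> e \<noteq> 1"
  shows "bad_edges E \<gamma> \<alpha>' = bad_edges E \<gamma> \<alpha>" "ugly_edges E \<gamma> \<alpha>' = ugly_edges E \<gamma> \<alpha> - {e}"
  using assms unfolding bad_edges_def ugly_edges_def by auto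

lemma minimal_col_ugly_edge_in_no_triangle:
  assumes G: "simple_graph V E" and CL: "chordless E"
    and \<gamma>: "proper_coloring E (max_degree V E) \<gamma>"
    and min: "minimal_col V E \<gamma> \<beta> \<alpha>"
    and ugly: "{u, v} \<in> ugly_edges E \<gamma> \<alpha>"
    and uw: "{u, w} \<in> E" and vw: "{v, w} \<in> E"
  shows False
proof -
  define t where "t = max_degree V E + 1"
  have \<alpha>: "\<alpha> \<in> Ccol V E \<beta>" using min unfolding minimal_col_def by blast
  then have P: "proper_coloring E t \<alpha>" unfolding Ccol_def t_def by simp
  have uv: "{u, v} \<in> E" "\<gamma> {u, v} \<noteq> 1" "\<alpha> {u, v} = 1"
    using ugly unfolding ugly_edges_def by auto
  have "4 \<le> t"
    using proper_coloring_triangle_ge_3[OF G \<gamma> uv(1) uw vw] unfolding t_def by simp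
  then obtain c where c: "c \<in> {1..t}" "c \<noteq> 1" "c \<noteq> \<alpha> {u, w}" "c \<noteq> \<alpha> {v, w}"
    by (rule color_avoiding_three) blast
  obtain \<alpha>1 where K1: "(Kchange E t)\<^sup>*\<^sup>* \<alpha> \<alpha>1" and O1: "\<forall>f. \<alpha>1 f = 1 \<longleftrightarrow> \<alpha> f = 1"
    and U1: "\<forall>f\<in>E. v \<in> f \<or> w \<in> f \<longrightarrow> \<alpha>1 f = \<alpha> f" and M1: "missing E t \<alpha>1 u c"
    using make_missing_at_triangle_vertex[OF G CL P t_def uv(1) uw vw uv(3) c(1,2,3)] .
  have vu: "{v, u} \<in> E" using uv(1) by (simp add: insert_commute)
  have "\<alpha>1 {v, u} = 1" using O1 uv(3) by (simp add: insert_commute)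
  moreover have "c \<noteq> \<alpha>1 {v, w}" using U1 vw c(4) by simp
  ultimately obtain \<alpha>2 where K2: "(Kchange E t)\<^sup>*\<^sup>* \<alpha>1 \<alpha>2" and O2: "\<forall>f. \<alpha>2 f = 1 \<longleftrightarrow> \<alpha>1 f = 1"
    and U2: "\<forall>f\<in>E. u \<in> f \<or> w \<in> f \<longrightarrow> \<alpha>2 f = \<alpha>1 f" and M2: "missing E t \<alpha>2 v c"
    using make_missing_at_triangle_vertex[OF G CL proper_coloring_Kchanges[OF K1 P] t_def vu vw uw]
      c(1,2) by blast
  have P2: "proper_coloring E t \<alpha>2"
    using proper_coloring_Kchanges[OF K2 proper_coloring_Kchanges[OF K1 P]] .
  have M2': "missing E t \<alpha>2 u c" using M1 U2 unfolding missing_def by auto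
  have uv2: "\<alpha>2 {u, v} = 1" using O1 O2 uv(3) by simp
  define \<alpha>3 where "\<alpha>3 = Kswap E \<alpha>2 1 c {u, v}"
  have "Kchange E t \<alpha>2 \<alpha>3"
    unfolding \<alpha>3_def using c(1,2) uv(1) uv2 t_def by (intro Kchange_Kswap) (auto simp: Kedges_def)
  then have C3: "\<alpha>3 \<in> Ccol V E \<beta>"
    using Ccol_Kchanges_closed[OF \<alpha>] K1 K2 unfolding t_def
    by (meson rtranclp.rtrancl_into_rtrancl rtranclp_trans)
  have "\<alpha>3 = \<alpha>2({u, v} := c)"
    unfolding \<alpha>3_def using Kswap_single_edge[OF P2 uv(1) uv2 M2' M2] .
  then have bad3: "bad_edges E \<gamma> \<alpha>3 = bad_edges E \<gamma> \<alpha>"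
    and ugly3: "ugly_edges E \<gamma> \<alpha>3 = ugly_edges E \<gamma> \<alpha> - {{u, v}}"
    using bad_ugly_edges_uncolor_one[of "{u, v}" \<alpha>3 \<alpha> \<gamma> E] O1 O2 c(2) uv(2) by auto
  have "card (ugly_edges E \<gamma> \<alpha>) \<le> card (ugly_edges E \<gamma> \<alpha>3)"
    using min C3 bad3 unfolding minimal_col_def by simp
  moreover have "finite (ugly_edges E \<gamma> \<alpha>)"
    using simple_graph_finite_edges[OF G] unfolding ugly_edges_def by simp
  ultimately show False using card_Diff1_less[OF _ ugly] ugly3 by simp
qed

theorem mainTheorem6:
  fixes V :: "'a set" and E :: "'a set set"
    and \<gamma> \<beta> \<alpha> :: "'a set \<Rightarrow> nat" and m :: "'a \<Rightarrow> nat"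
    and u v :: 'a and xs :: "'a list"
  assumes graph: "simple_graph V E"
    and chordless: "chordless E"
    and class1: "class1 V E"
    and gamma: "proper_coloring E (max_degree V E) \<gamma>"
    and beta: "proper_coloring E (max_degree V E + 1) \<beta>"
    and minimal: "minimal_col V E \<gamma> \<beta> \<alpha>"
    and m_missing: "\<forall>x\<in>V. missing E (max_degree V E + 1) \<alpha> x (m x)"
    and m_one: "\<forall>x\<in>V. m x = 1 \<longleftrightarrow> {c. missing E (max_degree V E + 1) \<alpha> x c} = {1}"
    and ugly: "{u, v} \<in> ugly_edges E \<gamma> \<alpha>"
    and fan: "is_fan E (max_degree V E + 1) \<alpha> m u xs"
    and x0: "hd xs = v"
    and p_ge_1: "length xs \<ge> 2"
  shows "{v, last xs} \<notin> E"
  \<comment> \<open>Of the fan only the edge \<open>u x\<^sub>p\<close> matters: no ugly edge lies on a triangle at all.\<close>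
proof
  assume "{v, last xs} \<in> E"
  moreover have "{u, last xs} \<in> E"
    using fan unfolding is_fan_def by simp
  ultimately show False
    using minimal_col_ugly_edge_in_no_triangle[OF graph chordless gamma minimal ugly] by blast
qed

end
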